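(* Let $A,B\subseteq\mathcal{R}$ be outer measurable with $M_u(B)=0$. Then every subset $C\subseteq B$ is outer measurable with $M_u(C)=0$, and $A\setminus C$ is outer measurable with $M_u(A\setminus C)=M_u(A)$.
   Context: $\mathcal{R}$ denotes the Levi-Civita field: functions $x:\mathbb{Q}\to\mathbb{R}$ with left-finite support, with componentwise addition and formal power series multiplication, ordered by $x>0$ iff $x\ne0$ and $x[\min\operatorname{supp}x]>0$; it is a non-Archimedean ordered field extension of $\mathbb{R}$, Cauchy complete in the order topology, in which all limits and series are taken (a series $\sum a_n$ converges iff $a_n\to0$). An interval is a set $[a,b],[a,b),(a,b]$ or $(a,b)$ with $a<b$ in $\mathcal{R}$, of length $l=b-a$. A cover of $A\subseteq\mathcal{R}$ is a sequence of intervals $(S_n)_{n\ge1}$ with $A\subseteq\bigcup_n S_n$ and $\sum_n l(S_n)$ convergent in $\mathcal{R}$. $A$ is called outer measurable if the infimum $\inf\{\sum_n l(S_n): (S_n)\text{ a cover of }A\}$ exists in $\mathcal{R}$; this infimum is then called the outer measure $M_u(A)$. *)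

theory Defs
  imports Complex_Main
begin

section \<open>The Levi-Civita field\<close>

typedef lc = "{x :: rat \<Rightarrow> real. \<forall>r. finite {q. x q \<noteq> 0 \<and> q < r}}"
  by (rule exI[of _ "\<lambda>_. 0"]) auto

instantiation lc :: "{zero, one, plus, minus, uminus, times, ord, abs}"
begin

definition zero_lc :: lc where
  "zero_lc = Abs_lc (\<lambda>_. 0)"

definition one_lc :: lc where
  "one_lc = Abs_lc (\<lambda>q. if q = 0 then 1 else 0)"

definition plus_lc :: "lc \<Rightarrow> lc \<Rightarrow> lc" where
  "plus_lc x y = Abs_lc (\<lambda>q. Rep_lc x q + Rep_lc y q)"

definition uminus_lc :: "lc \<Rightarrow> lc" where
  "uminus_lc x = Abs_lc (\<lambda>q. - Rep_lc x q)"

definition minus_lc :: "lc \<Rightarrow> lc \<Rightarrow> lc" where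
  "minus_lc x y = Abs_lc (\<lambda>q. Rep_lc x q - Rep_lc y q)"

text \<open>Formal power series (Cauchy) product; the sum is finite by left-finiteness.\<close>
definition times_lc :: "lc \<Rightarrow> lc \<Rightarrow> lc" where
  "times_lc x y = Abs_lc (\<lambda>q. \<Sum>p\<in>{p. Rep_lc x p \<noteq> 0 \<and> Rep_lc y (q - p) \<noteq> 0}.
                                  Rep_lc x p * Rep_lc y (q - p))"

definition lc_pos :: "lc \<Rightarrow> bool" where
  "lc_pos x \<longleftrightarrow> (\<exists>q. Rep_lc x q > 0 \<and> (\<forall>p<q. Rep_lc x p = 0))"

definition less_lc :: "lc \<Rightarrow> lc \<Rightarrow> bool" where
  "less_lc x y \<longleftrightarrow> lc_pos (y - x)"

definition less_eq_lc :: "lc \<Rightarrow> lc \<Rightarrow> bool" where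
  "less_eq_lc x y \<longleftrightarrow> x < y \<or> x = y"

definition abs_lc :: "lc \<Rightarrow> lc" where
  "abs_lc x = (if x < 0 then - x else x)"

instance ..
end

definition lc_tendsto :: "(nat \<Rightarrow> lc) \<Rightarrow> lc \<Rightarrow> bool" where
  "lc_tendsto s L \<longleftrightarrow> (\<forall>e>0. \<exists>N. \<forall>n\<ge>N. \<bar>s n - L\<bar> < e)"

primrec lc_psum :: "(nat \<Rightarrow> lc) \<Rightarrow> nat \<Rightarrow> lc" where
  "lc_psum f 0 = 0"
| "lc_psum f (Suc n) = lc_psum f n + f n"

definition lc_summable :: "(nat \<Rightarrow> lc) \<Rightarrow> bool" where
  "lc_summable f \<longleftrightarrow> (\<exists>L. lc_tendsto (lc_psum f) L)"

definition lc_suminf :: "(nat \<Rightarrow> lc) \<Rightarrow> lc" where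
  "lc_suminf f = (THE L. lc_tendsto (lc_psum f) L)"

datatype ikind = IClosed | IClosedOpen | IOpenClosed | IOpen

fun iset :: "lc \<times> lc \<times> ikind \<Rightarrow> lc set" where
  "iset (a, b, IClosed) = {x. a \<le> x \<and> x \<le> b}"
| "iset (a, b, IClosedOpen) = {x. a \<le> x \<and> x < b}"
| "iset (a, b, IOpenClosed) = {x. a < x \<and> x \<le> b}"
| "iset (a, b, IOpen) = {x. a < x \<and> x < b}"

fun ilen :: "lc \<times> lc \<times> ikind \<Rightarrow> lc" where
  "ilen (a, b, k) = b - a"

fun is_interval :: "lc \<times> lc \<times> ikind \<Rightarrow> bool" where
  "is_interval (a, b, k) \<longleftrightarrow> a < b"

definition is_cover :: "(nat \<Rightarrow> lc \<times> lc \<times> ikind) \<Rightarrow> lc set \<Rightarrow> bool" where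
  "is_cover S A \<longleftrightarrow> (\<forall>n. is_interval (S n)) \<and> A \<subseteq> (\<Union>n. iset (S n))
                     \<and> lc_summable (\<lambda>n. ilen (S n))"

definition cover_sums :: "lc set \<Rightarrow> lc set" where
  "cover_sums A = {lc_suminf (\<lambda>n. ilen (S n)) | S. is_cover S A}"

definition lc_is_inf :: "lc set \<Rightarrow> lc \<Rightarrow> bool" where
  "lc_is_inf V m \<longleftrightarrow> (\<forall>v\<in>V. m \<le> v) \<and> (\<forall>m'. (\<forall>v\<in>V. m' \<le> v) \<longrightarrow> m' \<le> m)"

definition outer_measurable :: "lc set \<Rightarrow> bool" where
  "outer_measurable A \<longleftrightarrow> (\<exists>m. lc_is_inf (cover_sums A) m)"

definition Mu :: "lc set \<Rightarrow> lc" where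
  "Mu A = (THE m. lc_is_inf (cover_sums A) m)"

end

theory Submission
  imports Defs
begin

text \<open>
  The outer measure is an infimum over cover sums, and cover sums are antitone in the covered set,
  so a subset of a null set is null. For \<open>A - C\<close>, every cover of \<open>A - C\<close> can be interleaved
  with a cover of \<open>C\<close> of arbitrarily small total length to give a cover of \<open>A\<close>; hence no cover
  of \<open>A - C\<close> can be shorter than \<open>Mu A\<close>. The only analytic input is that the interleaved
  series converges to the sum of the two limits, which needs halving of \<open>\<epsilon>\<close> in \<open>\<R>\<close>.
\<close>

definition left_finite :: "(rat \<Rightarrow> real) \<Rightarrow> bool" where
  "left_finite f \<longleftrightarrow> (\<forall>r. finite {q. f q \<noteq> 0 \<and> q < r})"

lemma left_finite_Rep_lc: "left_finite (Rep_lc x)"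
  using Rep_lc[of x] unfolding left_finite_def by simp

lemma Rep_lc_Abs_lc: "left_finite f \<Longrightarrow> Rep_lc (Abs_lc f) = f"
  by (rule Abs_lc_inverse) (simp add: left_finite_def)

lemma left_finite_zero: "left_finite (\<lambda>_. 0)"
  unfolding left_finite_def by simp

lemma left_finite_add:
  assumes "left_finite f" "left_finite g"
  shows "left_finite (\<lambda>q. f q + g q)"
  unfolding left_finite_def
proof
  fix r
  have "{q. f q + g q \<noteq> 0 \<and> q < r} \<subseteq> {q. f q \<noteq> 0 \<and> q < r} \<union> {q. g q \<noteq> 0 \<and> q < r}"
    by auto
  then show "finite {q. f q + g q \<noteq> 0 \<and> q < r}"
    using assms unfolding left_finite_def by (meson finite_Un finite_subset)
qed

lemma left_finite_cmult: "left_finite f \<Longrightarrow> left_finite (\<lambda>q. c * f q)"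
  unfolding left_finite_def by (simp add: rev_finite_subset)

lemma Rep_lc_zero: "Rep_lc 0 = (\<lambda>_. 0)"
  unfolding zero_lc_def by (rule Rep_lc_Abs_lc[OF left_finite_zero])

lemma Rep_lc_plus: "Rep_lc (x + y) = (\<lambda>q. Rep_lc x q + Rep_lc y q)"
  unfolding plus_lc_def by (rule Rep_lc_Abs_lc[OF left_finite_add[OF left_finite_Rep_lc left_finite_Rep_lc]])

lemma Rep_lc_uminus: "Rep_lc (- x) = (\<lambda>q. - Rep_lc x q)"
  unfolding uminus_lc_def
  using Rep_lc_Abs_lc[OF left_finite_cmult[of _ "-1", OF left_finite_Rep_lc]] by simp

lemma Rep_lc_minus: "Rep_lc (x - y) = (\<lambda>q. Rep_lc x q - Rep_lc y q)"
  unfolding minus_lc_def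
  using Rep_lc_Abs_lc[OF left_finite_add[OF left_finite_Rep_lc
        left_finite_cmult[of _ "-1", OF left_finite_Rep_lc]]] by simp

lemma lc_eqI: "(\<And>q. Rep_lc x q = Rep_lc y q) \<Longrightarrow> x = y"
  by (metis Rep_lc_inject ext)

instance lc :: ab_group_add
  by standard (auto intro!: lc_eqI simp: Rep_lc_plus Rep_lc_minus Rep_lc_uminus Rep_lc_zero)

lemma not_lc_pos_zero: "\<not> lc_pos 0"
  unfolding lc_pos_def Rep_lc_zero by simp

lemma lc_pos_uminus_asym:
  assumes "lc_pos x"
  shows "\<not> lc_pos (- x)"
proof
  assume "lc_pos (- x)"
  then obtain b where b: "Rep_lc x b < 0" "\<forall>p<b. Rep_lc x p = 0"
    unfolding lc_pos_def Rep_lc_uminus by auto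
  obtain a where a: "Rep_lc x a > 0" "\<forall>p<a. Rep_lc x p = 0"
    using assms unfolding lc_pos_def by blast
  show False
    using a b by (cases a b rule: linorder_cases) auto
qed

lemma lc_pos_add:
  assumes "lc_pos x" "lc_pos y"
  shows "lc_pos (x + y)"
proof -
  obtain a where a: "Rep_lc x a > 0" "\<forall>p<a. Rep_lc x p = 0"
    using assms(1) unfolding lc_pos_def by blast
  obtain b where b: "Rep_lc y b > 0" "\<forall>p<b. Rep_lc y p = 0"
    using assms(2) unfolding lc_pos_def by blast
  have "0 < Rep_lc x (min a b) + Rep_lc y (min a b) \<and>
        (\<forall>p<min a b. Rep_lc x p + Rep_lc y p = 0)"
    using a b by (cases a b rule: linorder_cases) auto
  then show ?thesis
    unfolding lc_pos_def Rep_lc_plus by blast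
qed

text \<open>The least support point exists because the support below any rational is finite.\<close>
lemma lc_pos_total:
  assumes "x \<noteq> 0"
  shows "lc_pos x \<or> lc_pos (- x)"
proof -
  obtain s where s: "Rep_lc x s \<noteq> 0"
    using assms lc_eqI Rep_lc_zero by metis
  define F where "F = {q. Rep_lc x q \<noteq> 0 \<and> q < s + 1}"
  have F: "finite F" "s \<in> F"
    using left_finite_Rep_lc[of x] s unfolding left_finite_def F_def by simp_all
  define m where "m = Min F"
  have "m \<in> F" "m \<le> s"
    using F Min_in Min_le unfolding m_def by blast+
  have below: "Rep_lc x p = 0" if "p < m" for p
  proof (rule ccontr)
    assume "Rep_lc x p \<noteq> 0"
    with \<open>p < m\<close> \<open>m \<le> s\<close> have "p \<in> F" unfolding F_def by simp
    with F have "m \<le> p" unfolding m_def by simp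
    with \<open>p < m\<close> show False by simp
  qed
  have "Rep_lc x m > 0 \<or> - Rep_lc x m > 0"
    using \<open>m \<in> F\<close> unfolding F_def by auto
  then show ?thesis
    unfolding lc_pos_def Rep_lc_uminus using below by auto
qed

lemma less_lc_iff: "x < y \<longleftrightarrow> lc_pos (y - x)" for x y :: lc
  by (rule less_lc_def)

lemma less_eq_lc_iff: "x \<le> y \<longleftrightarrow> lc_pos (y - x) \<or> x = y" for x y :: lc
  unfolding less_eq_lc_def less_lc_def ..

instance lc :: linordered_ab_group_add
proof
  fix x y z :: lc
  have asym: "lc_pos (y - x) \<Longrightarrow> \<not> lc_pos (x - y)" for x y :: lc
    using lc_pos_uminus_asym[of "y - x"] by simp
  show "x < y \<longleftrightarrow> x \<le> y \<and> \<not> y \<le> x"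
    using asym not_lc_pos_zero unfolding less_lc_iff less_eq_lc_iff by auto
  show "x \<le> x"
    by (simp add: less_eq_lc_iff)
  show "x \<le> z" if "x \<le> y" "y \<le> z"
    using that lc_pos_add[of "z - y" "y - x"] unfolding less_eq_lc_iff by auto
  show "x = y" if "x \<le> y" "y \<le> x"
    using that asym unfolding less_eq_lc_iff by auto
  show "x \<le> y \<or> y \<le> x"
    using lc_pos_total[of "y - x"] unfolding less_eq_lc_iff by auto
  show "x \<le> y \<Longrightarrow> z + x \<le> z + y"
    by (simp add: less_eq_lc_iff)
qed

instance lc :: abs_if
  by standard (simp add: abs_lc_def)

instance lc :: ordered_ab_group_add_abs
proof
  have abs_ge: "a \<le> \<bar>a\<bar> \<and> - a \<le> \<bar>a\<bar>" for a :: lc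
    by (cases "a < 0") (simp_all add: abs_if less_imp_le neg_le_iff_le)
  have abs_leI: "\<bar>a\<bar> \<le> b" if "a \<le> b" "- a \<le> b" for a b :: lc
    using that by (simp add: abs_if)
  fix a b :: lc
  show "a \<le> \<bar>a\<bar>" "0 \<le> \<bar>a\<bar>" "\<bar>- a\<bar> = \<bar>a\<bar>"
    using abs_ge[of a] by (auto simp: abs_if)
  show "a \<le> b \<Longrightarrow> - a \<le> b \<Longrightarrow> \<bar>a\<bar> \<le> b"
    by (rule abs_leI)
  show "\<bar>a + b\<bar> \<le> \<bar>a\<bar> + \<bar>b\<bar>"
  proof (rule abs_leI)
    show "a + b \<le> \<bar>a\<bar> + \<bar>b\<bar>"
      using abs_ge by (blast intro: add_mono)
    show "- (a + b) \<le> \<bar>a\<bar> + \<bar>b\<bar>"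
      using add_mono[of "- a" "\<bar>a\<bar>" "- b" "\<bar>b\<bar>"] abs_ge by simp
  qed
qed

definition lc_half :: "lc \<Rightarrow> lc" where
  "lc_half e = Abs_lc (\<lambda>q. Rep_lc e q / 2)"

lemma Rep_lc_half: "Rep_lc (lc_half e) = (\<lambda>q. Rep_lc e q / 2)"
  unfolding lc_half_def using Rep_lc_Abs_lc[OF left_finite_cmult[of _ "1/2", OF left_finite_Rep_lc]]
  by simp

lemma lc_half_add_self: "lc_half e + lc_half e = e"
  by (rule lc_eqI) (simp add: Rep_lc_plus Rep_lc_half)

lemma lc_half_pos: "0 < e \<Longrightarrow> 0 < lc_half e"
  unfolding less_lc_iff lc_pos_def by (simp add: Rep_lc_half)

lemma lc_tendsto_eventually:
  "lc_tendsto s L \<longleftrightarrow> (\<forall>e>0. eventually (\<lambda>n. \<bar>s n - L\<bar> < e) sequentially)"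
  unfolding lc_tendsto_def eventually_sequentially ..

lemma lc_tendsto_unique:
  assumes "lc_tendsto s L" "lc_tendsto s L'"
  shows "L = L'"
proof (rule ccontr)
  assume "L \<noteq> L'"
  define h where "h = lc_half \<bar>L - L'\<bar>"
  have "0 < h"
    unfolding h_def using \<open>L \<noteq> L'\<close> by (simp add: lc_half_pos)
  then have "eventually (\<lambda>n. \<bar>s n - L\<bar> < h) sequentially"
    "eventually (\<lambda>n. \<bar>s n - L'\<bar> < h) sequentially"
    using assms unfolding lc_tendsto_eventually by blast+
  then obtain n where n: "\<bar>s n - L\<bar> < h" "\<bar>s n - L'\<bar> < h"
    using eventually_happens'[OF sequentially_bot eventually_conj] by blast
  have "\<bar>L - L'\<bar> \<le> \<bar>s n - L'\<bar> + \<bar>s n - L\<bar>"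
    using abs_triangle_ineq4[of "s n - L'" "s n - L"] by simp
  also have "\<dots> < h + h"
    by (rule add_strict_mono[OF n(2) n(1)])
  finally show False
    unfolding h_def lc_half_add_self by simp
qed

lemma lc_suminf_eqI: "lc_tendsto (lc_psum f) L \<Longrightarrow> lc_suminf f = L"
  unfolding lc_suminf_def using lc_tendsto_unique by blast

lemma lc_tendsto_nonneg:
  assumes "\<And>n. 0 \<le> s n" "lc_tendsto s L"
  shows "0 \<le> L"
proof (rule ccontr)
  assume "\<not> 0 \<le> L"
  then have "0 < - L"
    by simp
  then obtain n where "\<bar>s n - L\<bar> < - L"
    using assms(2) unfolding lc_tendsto_def by blast
  with abs_ge_self have "s n - L < - L"
    by (rule order.strict_trans1)
  with assms(1)[of n] show False
    by simp
qed

lemma lc_tendsto_add: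
  assumes "lc_tendsto s v" "lc_tendsto t w"
  shows "lc_tendsto (\<lambda>n. s n + t n) (v + w)"
  unfolding lc_tendsto_eventually
proof (intro allI impI)
  fix e :: lc
  assume "0 < e"
  then have "eventually (\<lambda>n. \<bar>s n - v\<bar> < lc_half e) sequentially"
    "eventually (\<lambda>n. \<bar>t n - w\<bar> < lc_half e) sequentially"
    using assms lc_half_pos unfolding lc_tendsto_eventually by blast+
  then have "eventually (\<lambda>n. \<bar>s n - v\<bar> < lc_half e \<and> \<bar>t n - w\<bar> < lc_half e) sequentially"
    by (rule eventually_conj)
  then show "eventually (\<lambda>n. \<bar>s n + t n - (v + w)\<bar> < e) sequentially"
  proof (rule eventually_mono)
    fix n
    assume "\<bar>s n - v\<bar> < lc_half e \<and> \<bar>t n - w\<bar> < lc_half e"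
    have "\<bar>s n + t n - (v + w)\<bar> \<le> \<bar>s n - v\<bar> + \<bar>t n - w\<bar>"
      by (rule abs_diff_triangle_ineq)
    also have "\<dots> < lc_half e + lc_half e"
      using \<open>\<bar>s n - v\<bar> < lc_half e \<and> \<bar>t n - w\<bar> < lc_half e\<close> by (blast intro: add_strict_mono)
    finally show "\<bar>s n + t n - (v + w)\<bar> < e"
      by (simp only: lc_half_add_self)
  qed
qed

lemma lc_tendsto_compose:
  assumes "lc_tendsto s L" "filterlim r sequentially sequentially"
  shows "lc_tendsto (\<lambda>n. s (r n)) L"
  unfolding lc_tendsto_eventually
proof (intro allI impI)
  fix e :: lc
  assume "0 < e"
  then have "eventually (\<lambda>m. \<bar>s m - L\<bar> < e) sequentially"
    using assms(1) unfolding lc_tendsto_eventually by blast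
  then show "eventually (\<lambda>n. \<bar>s (r n) - L\<bar> < e) sequentially"
    using assms(2) by (rule eventually_compose_filterlim)
qed

lemma filterlim_div2_sequentially: "filterlim (\<lambda>n. n div 2 :: nat) sequentially sequentially"
  unfolding filterlim_at_top eventually_sequentially
  by (metis div_le_mono nonzero_mult_div_cancel_left zero_neq_numeral)

lemma lc_psum_nonneg: "(\<And>n. 0 \<le> f n) \<Longrightarrow> 0 \<le> lc_psum f n"
  by (induction n) (auto intro: add_nonneg_nonneg)

definition interleave :: "(nat \<Rightarrow> 'a) \<Rightarrow> (nat \<Rightarrow> 'a) \<Rightarrow> nat \<Rightarrow> 'a" where
  "interleave f g n = (if even n then f (n div 2) else g (n div 2))"

lemma lc_psum_interleave:
  "lc_psum (interleave f g) n = lc_psum f (Suc n div 2) + lc_psum g (n div 2)"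
  by (induction n) (auto simp: interleave_def algebra_simps elim: oddE)

lemma lc_tendsto_psum_interleave:
  assumes "lc_tendsto (lc_psum f) v" "lc_tendsto (lc_psum g) w"
  shows "lc_tendsto (lc_psum (interleave f g)) (v + w)"
proof -
  have "filterlim (\<lambda>n. Suc n div 2) sequentially sequentially"
    using filterlim_compose[OF filterlim_div2_sequentially filterlim_Suc] by simp
  then show ?thesis
    unfolding lc_psum_interleave
    using lc_tendsto_add[OF lc_tendsto_compose[OF assms(1)]
        lc_tendsto_compose[OF assms(2) filterlim_div2_sequentially]] by simp
qed

lemma ilen_pos: "is_interval I \<Longrightarrow> 0 < ilen I"
  by (cases I) auto

lemma cover_sums_nonneg:
  assumes "v \<in> cover_sums A"
  shows "0 \<le> v"
proof -
  obtain S where S: "is_cover S A" "v = lc_suminf (\<lambda>n. ilen (S n))"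
    using assms unfolding cover_sums_def by blast
  then obtain L where L: "lc_tendsto (lc_psum (\<lambda>n. ilen (S n))) L"
    unfolding is_cover_def lc_summable_def by blast
  have "0 \<le> ilen (S n)" for n
    using S(1) ilen_pos less_imp_le unfolding is_cover_def by blast
  then have "0 \<le> L"
    using lc_tendsto_nonneg[OF lc_psum_nonneg L] by blast
  then show ?thesis
    using S(2) lc_suminf_eqI[OF L] by simp
qed

lemma is_cover_subset: "is_cover S X \<Longrightarrow> Y \<subseteq> X \<Longrightarrow> is_cover S Y"
  unfolding is_cover_def by blast

lemma cover_sums_antimono: "Y \<subseteq> X \<Longrightarrow> cover_sums X \<subseteq> cover_sums Y"
  unfolding cover_sums_def using is_cover_subset by blast

lemma cover_sums_Un:
  assumes "v \<in> cover_sums X" "w \<in> cover_sums Y"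
  shows "v + w \<in> cover_sums (X \<union> Y)"
proof -
  obtain S T where S: "is_cover S X" "v = lc_suminf (\<lambda>n. ilen (S n))"
    and T: "is_cover T Y" "w = lc_suminf (\<lambda>n. ilen (T n))"
    using assms unfolding cover_sums_def by blast
  obtain v' w' where v': "lc_tendsto (lc_psum (\<lambda>n. ilen (S n))) v'"
    and w': "lc_tendsto (lc_psum (\<lambda>n. ilen (T n))) w'"
    using S(1) T(1) unfolding is_cover_def lc_summable_def by blast
  have lengths: "(\<lambda>n. ilen (interleave S T n)) = interleave (\<lambda>n. ilen (S n)) (\<lambda>n. ilen (T n))"
    by (auto simp: interleave_def)
  have lim: "lc_tendsto (lc_psum (\<lambda>n. ilen (interleave S T n))) (v + w)"
    unfolding lengths S(2) T(2) lc_suminf_eqI[OF v'] lc_suminf_eqI[OF w']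
    by (rule lc_tendsto_psum_interleave[OF v' w'])
  have "iset (S n) = iset (interleave S T (2 * n))" "iset (T n) = iset (interleave S T (2 * n + 1))" for n
    by (simp_all add: interleave_def)
  then have "X \<union> Y \<subseteq> (\<Union>n. iset (interleave S T n))"
    using S(1) T(1) unfolding is_cover_def by blast
  moreover have "is_interval (interleave S T n)" for n
    using S(1) T(1) unfolding is_cover_def interleave_def by simp
  ultimately have "is_cover (interleave S T) (X \<union> Y)"
    using lim unfolding is_cover_def lc_summable_def by blast
  then show ?thesis
    unfolding cover_sums_def using lc_suminf_eqI[OF lim] by force
qed

lemma lc_is_inf_unique: "lc_is_inf V m \<Longrightarrow> lc_is_inf V m' \<Longrightarrow> m = m'"
  unfolding lc_is_inf_def by (meson order_antisym)

lemma lc_is_inf_Mu: "outer_measurable A \<Longrightarrow> lc_is_inf (cover_sums A) (Mu A)"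
  unfolding outer_measurable_def Mu_def using lc_is_inf_unique theI by metis

lemma outer_measurable_MuI: "lc_is_inf (cover_sums A) m \<Longrightarrow> outer_measurable A \<and> Mu A = m"
  unfolding outer_measurable_def Mu_def using lc_is_inf_unique by blast

lemma lc_is_inf_null_subset:
  assumes "lc_is_inf (cover_sums B) 0" "C \<subseteq> B"
  shows "lc_is_inf (cover_sums C) 0"
  unfolding lc_is_inf_def
proof (intro conjI ballI allI impI)
  show "0 \<le> v" if "v \<in> cover_sums C" for v
    using that by (rule cover_sums_nonneg)
  show "m \<le> 0" if "\<forall>v\<in>cover_sums C. m \<le> v" for m
    using that assms cover_sums_antimono[OF assms(2)] unfolding lc_is_inf_def by blast
qed

lemma lc_is_inf_diff_null:
  assumes A: "lc_is_inf (cover_sums A) m" and N: "lc_is_inf (cover_sums N) 0"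
  shows "lc_is_inf (cover_sums (A - N)) m"
  unfolding lc_is_inf_def
proof (intro conjI ballI allI impI)
  fix v
  assume v: "v \<in> cover_sums (A - N)"
  show "m \<le> v"
  proof (rule ccontr)
    assume "\<not> m \<le> v"
    then have "\<not> m - v \<le> 0"
      by simp
    then obtain w where w: "w \<in> cover_sums N" "w < m - v"
      using N unfolding lc_is_inf_def by (meson not_le)
    have "v + w \<in> cover_sums A"
      using cover_sums_Un[OF v w(1)] cover_sums_antimono[of A "A - N \<union> N"] by blast
    then have "m \<le> v + w"
      using A unfolding lc_is_inf_def by blast
    with w(2) show False
      by (simp add: algebra_simps)
  qed
next
  fix m'
  assume "\<forall>v\<in>cover_sums (A - N). m' \<le> v"
  then show "m' \<le> m"
    using A cover_sums_antimono[of "A - N" A] unfolding lc_is_inf_def by blast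
qed

theorem proposition3p2:
  fixes A B C :: "lc set"
  assumes "outer_measurable A" and "outer_measurable B" and "Mu B = 0" and "C \<subseteq> B"
  shows "outer_measurable C \<and> Mu C = 0 \<and> outer_measurable (A - C) \<and> Mu (A - C) = Mu A"
proof -
  have "lc_is_inf (cover_sums C) 0"
    using lc_is_inf_null_subset lc_is_inf_Mu[OF assms(2)] assms(3,4) by simp
  then show ?thesis
    using outer_measurable_MuI lc_is_inf_diff_null lc_is_inf_Mu[OF assms(1)] by blast
qed

end
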